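(* Let $G$ be a directed graph and $D$ a demand such that every $h$-length moving cut $C$ satisfies $\mathrm{spars}_h(C,D)\ge\phi$, where $\phi>0$. Then $D$ can be routed in $G$ along paths of length at most $h$ with congestion at most $O(\log N/\phi)$.
   Context: $G=(V,E)$ is a finite directed graph with $n=|V|$; every edge has a length $\ell(e)$ and capacity $u(e)$, positive integers bounded by $N=\mathrm{poly}(n)$. A demand is $D:V\times V\to\mathbb{R}_{\ge0}$. An $h$-length moving cut is $C:E\to\{0,\tfrac1h,\dots\}\cap[0,1]$ with size $|C|=\sum_eu(e)C(e)$; $G-C$ is $G$ with lengths $\ell(e)+h\cdot C(e)$. $\mathrm{sep}_h(C,D)=\sum_{(u,v):\mathrm{dist}_{G-C}(u,v)>h}D(u,v)$ and $\mathrm{spars}_h(C,D)=|C|/\mathrm{sep}_h(C,D)$, taken as $+\infty$ when $\mathrm{sep}_h(C,D)=0$. A flow assigns nonnegative values to simple directed paths; it routes $D$ if for each ordered pair $(v,w)$ the total value on $v\to w$ paths equals $D(v,w)$; its congestion is $\max_e(\text{flow through }e)/u(e)$. *)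

theory Defs
  imports "HOL-Analysis.Analysis" "HOL-Library.Extended_Real"
begin

definition path_edges :: "nat list \<Rightarrow> (nat \<times> nat) list" where
  "path_edges p = zip p (tl p)"

definition simple_path :: "(nat \<times> nat) set \<Rightarrow> nat list \<Rightarrow> nat \<Rightarrow> nat \<Rightarrow> bool" where
  "simple_path E p v w \<longleftrightarrow> p \<noteq> [] \<and> hd p = v \<and> last p = w \<and> distinct p
     \<and> set (path_edges p) \<subseteq> E"

definition path_len :: "(nat \<times> nat \<Rightarrow> real) \<Rightarrow> nat list \<Rightarrow> real" where
  "path_len L p = sum_list (map L (path_edges p))"

text \<open>Distance w.r.t. length function L (infinite if unreachable).\<close>
definition dist_G :: "(nat \<times> nat) set \<Rightarrow> (nat \<times> nat \<Rightarrow> real) \<Rightarrow> nat \<Rightarrow> nat \<Rightarrow> ereal" where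
  "dist_G E L v w = (INF p \<in> {p. simple_path E p v w}. ereal (path_len L p))"

definition moving_cut :: "(nat \<times> nat) set \<Rightarrow> nat \<Rightarrow> (nat \<times> nat \<Rightarrow> real) \<Rightarrow> bool" where
  "moving_cut E h C \<longleftrightarrow> (\<forall>e\<in>E. \<exists>j::nat. j \<le> h \<and> C e = real j / real h)"

definition cut_size :: "(nat \<times> nat) set \<Rightarrow> (nat \<times> nat \<Rightarrow> nat) \<Rightarrow> (nat \<times> nat \<Rightarrow> real) \<Rightarrow> real" where
  "cut_size E u C = (\<Sum>e\<in>E. real (u e) * C e)"

definition cut_len :: "(nat \<times> nat \<Rightarrow> nat) \<Rightarrow> nat \<Rightarrow> (nat \<times> nat \<Rightarrow> real) \<Rightarrow> nat \<times> nat \<Rightarrow> real" where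
  "cut_len l h C e = real (l e) + real h * C e"

definition sep :: "nat set \<Rightarrow> (nat \<times> nat) set \<Rightarrow> (nat \<times> nat \<Rightarrow> nat) \<Rightarrow> nat \<Rightarrow>
    (nat \<times> nat \<Rightarrow> real) \<Rightarrow> (nat \<Rightarrow> nat \<Rightarrow> real) \<Rightarrow> real" where
  "sep V E l h C D = (\<Sum>(v, w) \<in> {(v, w) \<in> V \<times> V. dist_G E (cut_len l h C) v w > ereal (real h)}. D v w)"

definition spars :: "nat set \<Rightarrow> (nat \<times> nat) set \<Rightarrow> (nat \<times> nat \<Rightarrow> nat) \<Rightarrow> (nat \<times> nat \<Rightarrow> nat) \<Rightarrow> nat \<Rightarrow>
    (nat \<times> nat \<Rightarrow> real) \<Rightarrow> (nat \<Rightarrow> nat \<Rightarrow> real) \<Rightarrow> ereal" where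
  "spars V E l u h C D =
     (if sep V E l h C D = 0 then \<infinity> else ereal (cut_size E u C / sep V E l h C D))"

definition is_flow :: "(nat \<times> nat) set \<Rightarrow> (nat list \<Rightarrow> real) \<Rightarrow> bool" where
  "is_flow E f \<longleftrightarrow> (\<forall>p. f p \<ge> 0) \<and> (\<forall>p. f p \<noteq> 0 \<longrightarrow> (\<exists>v w. simple_path E p v w))"

definition routes :: "nat set \<Rightarrow> (nat \<times> nat) set \<Rightarrow> (nat list \<Rightarrow> real) \<Rightarrow> (nat \<Rightarrow> nat \<Rightarrow> real) \<Rightarrow> bool" where
  "routes V E f D \<longleftrightarrow> (\<forall>v\<in>V. \<forall>w\<in>V. (\<Sum>p \<in> {p. simple_path E p v w}. f p) = D v w)"

definition edge_flow :: "(nat \<times> nat) set \<Rightarrow> (nat list \<Rightarrow> real) \<Rightarrow> nat \<times> nat \<Rightarrow> real" where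
  "edge_flow E f e = (\<Sum>p \<in> {p. (\<exists>v w. simple_path E p v w) \<and> e \<in> set (path_edges p)}. f p)"

text \<open>Congestion max_e flow(e)/u(e) (over the nonempty-or-empty edge set; 0 if E = {}).\<close>
definition congestion :: "(nat \<times> nat) set \<Rightarrow> (nat \<times> nat \<Rightarrow> nat) \<Rightarrow> (nat list \<Rightarrow> real) \<Rightarrow> real" where
  "congestion E u f = Max (insert 0 ((\<lambda>e. edge_flow E f e / real (u e)) ` E))"

end

(*
  Routing D along h-short paths with congestion K is a linear feasibility problem in the
  path flows. If it is infeasible, Farkas' lemma yields edge weights z >= 0 such that
  sum_q D(q) dist(q) > K sum_e u(e) z(e) =: K W, where dist(q) is the least z-length of an
  h-short path joining the pair q. For a threshold t > 0, rounding 2 h z(e) / t down to the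
  grid {0, 1/h, ..., 1} gives an h-length moving cut of size at most 2W/t which separates every
  pair with dist >= t, so by sparsity these pairs carry demand at most 2W/(t phi); the all-ones
  cut bounds the demand between distinct vertices by sum_e u(e) / phi <= N^3 / phi. Summing
  over the dyadic thresholds t = W/2, W/4, ..., W/2^L with 2^L >= N^3 gives
  sum_q D(q) dist(q) <= (1 + 4L) W / phi <= 40 ln N W / phi, so K = 40 ln N / phi is feasible.
*)

theory Submission
  imports Defs
begin

section \<open>Farkas' lemma by Fourier--Motzkin elimination\<close>

text \<open>A pair \<open>(a, b)\<close> encodes the inequality \<open>\<Sum>x\<in>X. a x * v x \<le> b\<close> in the unknowns \<open>v\<close>.\<close>

type_synonym 'x lin_ineq = "('x \<Rightarrow> real) \<times> real"

definition slack :: "'x set \<Rightarrow> ('x \<Rightarrow> real) \<Rightarrow> 'x lin_ineq \<Rightarrow> real" where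
  "slack X v c = snd c - (\<Sum>x\<in>X. fst c x * v x)"

definition satisfiable :: "'x set \<Rightarrow> 'x lin_ineq set \<Rightarrow> bool" where
  "satisfiable X S \<longleftrightarrow> (\<exists>v. \<forall>c\<in>S. 0 \<le> slack X v c)"

inductive_set nonneg_combinations :: "'x lin_ineq set \<Rightarrow> 'x lin_ineq set" for S where
  base: "c \<in> S \<Longrightarrow> c \<in> nonneg_combinations S"
| add: "(a, b) \<in> nonneg_combinations S \<Longrightarrow> (a', b') \<in> nonneg_combinations S \<Longrightarrow>
    (\<lambda>x. a x + a' x, b + b') \<in> nonneg_combinations S"
| scale: "(a, b) \<in> nonneg_combinations S \<Longrightarrow> 0 \<le> r \<Longrightarrow>
    (\<lambda>x. r * a x, r * b) \<in> nonneg_combinations S"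

lemma nonneg_combinations_trans:
  assumes "S' \<subseteq> nonneg_combinations S" "t \<in> nonneg_combinations S'"
  shows "t \<in> nonneg_combinations S"
  using assms(2) by induction (use assms(1) in \<open>auto intro: nonneg_combinations.intros\<close>)

lemma nonneg_combinations_coeff_zero:
  assumes "\<forall>c\<in>S. fst c x = 0" "t \<in> nonneg_combinations S"
  shows "fst t x = 0"
  using assms(2) by induction (use assms(1) in auto)

definition fm_combine :: "'x \<Rightarrow> 'x lin_ineq \<Rightarrow> 'x lin_ineq \<Rightarrow> 'x lin_ineq" where
  "fm_combine x0 p n =
     (\<lambda>x. - fst n x0 * fst p x + fst p x0 * fst n x, - fst n x0 * snd p + fst p x0 * snd n)"

definition fm_eliminate :: "'x \<Rightarrow> 'x lin_ineq set \<Rightarrow> 'x lin_ineq set" where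
  "fm_eliminate x0 S = {c\<in>S. fst c x0 = 0} \<union>
     (\<lambda>(p, n). fm_combine x0 p n) ` ({c\<in>S. fst c x0 > 0} \<times> {c\<in>S. fst c x0 < 0})"

lemma slack_fm_combine:
  "slack X v (fm_combine x0 p n) = - fst n x0 * slack X v p + fst p x0 * slack X v n"
  by (simp add: slack_def fm_combine_def algebra_simps sum.distrib sum_distrib_left
      sum_subtractf sum_negf)

lemma fm_eliminate_finite: "finite S \<Longrightarrow> finite (fm_eliminate x0 S)"
  unfolding fm_eliminate_def by auto

lemma fm_eliminate_coeff_zero: "\<forall>c\<in>fm_eliminate x0 S. fst c x0 = 0"
  unfolding fm_eliminate_def fm_combine_def by auto

lemma fm_combine_in_nonneg_combinations:
  assumes "p \<in> nonneg_combinations S" "n \<in> nonneg_combinations S" "0 \<le> fst p x0" "fst n x0 \<le> 0"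
  shows "fm_combine x0 p n \<in> nonneg_combinations S"
proof -
  obtain ap bp an bn where pn: "p = (ap, bp)" "n = (an, bn)"
    by fastforce
  have "(\<lambda>x. - an x0 * ap x + ap x0 * an x, - an x0 * bp + ap x0 * bn) \<in> nonneg_combinations S"
    using assms unfolding pn
    by (intro nonneg_combinations.add nonneg_combinations.scale) simp_all
  then show ?thesis
    unfolding pn fm_combine_def by simp
qed

lemma fm_eliminate_subset_combinations: "fm_eliminate x0 S \<subseteq> nonneg_combinations S"
  unfolding fm_eliminate_def
  by (auto intro!: fm_combine_in_nonneg_combinations intro: nonneg_combinations.base)

lemma exists_between_finite:
  fixes A B :: "real set"
  assumes "finite A" "finite B" "\<forall>a\<in>A. \<forall>b\<in>B. a \<le> b"
  obtains y where "\<forall>a\<in>A. a \<le> y" "\<forall>b\<in>B. y \<le> b"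
proof (cases "A = {}")
  case True
  show ?thesis
  proof (rule that)
    show "\<forall>b\<in>B. (if B = {} then 0 else Min B) \<le> b"
      using assms(2) by auto
  qed (use True in simp)
next
  case False
  show ?thesis
  proof (rule that)
    show "\<forall>a\<in>A. a \<le> Max A"
      using assms(1) by simp
    show "\<forall>b\<in>B. Max A \<le> b"
      using False assms by simp
  qed
qed

lemma slack_insert_upd:
  assumes "finite X" "x0 \<notin> X"
  shows "slack (insert x0 X) (v(x0 := y)) c = slack X v c - fst c x0 * y"
proof -
  have "(\<Sum>x\<in>X. fst c x * (v(x0 := y)) x) = (\<Sum>x\<in>X. fst c x * v x)"
    using assms(2) by (intro sum.cong) auto
  then show ?thesis
    using assms by (simp add: slack_def)
qed

lemma fm_eliminate_extend:
  assumes "finite S" "\<forall>c\<in>fm_eliminate x0 S. 0 \<le> slack X v c"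
  obtains y where "\<forall>c\<in>S. fst c x0 * y \<le> slack X v c"
proof -
  define Sp where "Sp = {c\<in>S. fst c x0 > 0}"
  define Sn where "Sn = {c\<in>S. fst c x0 < 0}"
  let ?bound = "\<lambda>c. slack X v c / fst c x0"
  have "\<forall>a\<in>?bound ` Sn. \<forall>b\<in>?bound ` Sp. a \<le> b"
  proof clarify
    fix n p assume "n \<in> Sn" "p \<in> Sp"
    moreover have "0 \<le> slack X v (fm_combine x0 p n)"
      using assms(2) \<open>n \<in> Sn\<close> \<open>p \<in> Sp\<close> unfolding fm_eliminate_def Sp_def Sn_def by blast
    ultimately show "?bound n \<le> ?bound p"
      unfolding Sp_def Sn_def slack_fm_combine by (simp add: field_simps)
  qed
  moreover have "finite (?bound ` Sn)" "finite (?bound ` Sp)"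
    using assms(1) unfolding Sp_def Sn_def by auto
  ultimately obtain y where yn: "\<forall>n\<in>Sn. ?bound n \<le> y" and yp: "\<forall>p\<in>Sp. y \<le> ?bound p"
    by (metis (no_types, lifting) exists_between_finite image_eqI)
  have "fst c x0 * y \<le> slack X v c" if c: "c \<in> S" for c
  proof -
    consider "fst c x0 = 0" | "c \<in> Sp" | "c \<in> Sn"
      using c unfolding Sp_def Sn_def by (cases "fst c x0" "0::real" rule: linorder_cases) auto
    then show ?thesis
    proof cases
      case 1
      then show ?thesis
        using assms(2) c unfolding fm_eliminate_def by auto
    next
      case 2
      have "y \<le> slack X v c / fst c x0" "0 < fst c x0"
        using yp 2 by (auto simp: Sp_def simp del: split_paired_All)
      then show ?thesis
        by (simp add: field_simps)
    next
      case 3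
      have "slack X v c / fst c x0 \<le> y" "fst c x0 < 0"
        using yn 3 by (auto simp: Sn_def simp del: split_paired_All)
      then show ?thesis
        by (simp add: field_simps)
    qed
  qed
  then show ?thesis
    using that by blast
qed

lemma satisfiable_fm_eliminate:
  assumes "finite S" "finite X" "x0 \<notin> X" "satisfiable X (fm_eliminate x0 S)"
  shows "satisfiable (insert x0 X) S"
proof -
  obtain v where "\<forall>c\<in>fm_eliminate x0 S. 0 \<le> slack X v c"
    using assms(4) unfolding satisfiable_def by blast
  then obtain y where "\<forall>c\<in>S. fst c x0 * y \<le> slack X v c"
    using fm_eliminate_extend[OF assms(1)] by blast
  then have "\<forall>c\<in>S. 0 \<le> slack (insert x0 X) (v(x0 := y)) c"
    by (simp add: slack_insert_upd[OF assms(2,3)])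
  then show ?thesis
    unfolding satisfiable_def by blast
qed

lemma infeasible_combination:
  assumes "finite X" "finite S" "\<not> satisfiable X S"
  shows "\<exists>t\<in>nonneg_combinations S. (\<forall>x\<in>X. fst t x = 0) \<and> snd t < 0"
  using assms
proof (induction X arbitrary: S rule: finite_induct)
  case empty
  then obtain c where "c \<in> S" "snd c < 0"
    unfolding satisfiable_def slack_def by force
  then show ?case
    by (auto intro: nonneg_combinations.base)
next
  case (insert x0 X)
  have "\<not> satisfiable X (fm_eliminate x0 S)"
    using satisfiable_fm_eliminate[OF insert.prems(1) insert.hyps(1,2)] insert.prems(2) by blast
  with insert.IH obtain t where
    t: "t \<in> nonneg_combinations (fm_eliminate x0 S)" "\<forall>x\<in>X. fst t x = 0" "snd t < 0"
    using fm_eliminate_finite[OF insert.prems(1)] by blast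
  have "fst t x0 = 0"
    using nonneg_combinations_coeff_zero[OF fm_eliminate_coeff_zero t(1)] .
  moreover have "t \<in> nonneg_combinations S"
    using nonneg_combinations_trans[OF fm_eliminate_subset_combinations t(1)] .
  ultimately show ?case
    using t(2,3) by auto
qed

lemma nonneg_combinations_coeffs:
  assumes "finite I" "t \<in> nonneg_combinations ((\<lambda>i. (A i, b i)) ` I)"
  shows "\<exists>\<mu>. (\<forall>i\<in>I. 0 \<le> \<mu> i) \<and> (\<forall>x. (\<Sum>i\<in>I. \<mu> i * A i x) = fst t x) \<and>
    (\<Sum>i\<in>I. \<mu> i * b i) = snd t"
  using assms(2)
proof induction
  case (base c)
  then obtain i0 where i0: "i0 \<in> I" "c = (A i0, b i0)"
    by blast
  have delta: "(\<Sum>i\<in>I. (if i = i0 then 1 else 0) * f i) = f i0" for f :: "_ \<Rightarrow> real"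
  proof -
    have "(\<Sum>i\<in>I. (if i = i0 then 1 else 0) * f i) = (\<Sum>i\<in>I. if i = i0 then f i else 0)"
      by (rule sum.cong) auto
    also have "\<dots> = f i0"
      using assms(1) i0(1) by simp
    finally show ?thesis .
  qed
  show ?case
    by (rule exI[of _ "\<lambda>i. if i = i0 then 1 else 0"]) (simp add: delta i0(2))
next
  case (add a c a' c')
  then obtain \<mu> \<mu>' where
    \<mu>: "\<forall>i\<in>I. 0 \<le> \<mu> i" "\<forall>x. (\<Sum>i\<in>I. \<mu> i * A i x) = a x" "(\<Sum>i\<in>I. \<mu> i * b i) = c" and
    \<mu>': "\<forall>i\<in>I. 0 \<le> \<mu>' i" "\<forall>x. (\<Sum>i\<in>I. \<mu>' i * A i x) = a' x" "(\<Sum>i\<in>I. \<mu>' i * b i) = c'"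
    by auto
  show ?case
    by (rule exI[of _ "\<lambda>i. \<mu> i + \<mu>' i"]) (simp add: \<mu> \<mu>' distrib_right sum.distrib)
next
  case (scale a c r)
  then obtain \<mu> where
    \<mu>: "\<forall>i\<in>I. 0 \<le> \<mu> i" "\<forall>x. (\<Sum>i\<in>I. \<mu> i * A i x) = a x" "(\<Sum>i\<in>I. \<mu> i * b i) = c"
    by auto
  show ?case
    by (rule exI[of _ "\<lambda>i. r * \<mu> i"])
      (simp add: \<mu>(1) scale.hyps(2) mult.assoc flip: sum_distrib_left \<mu>(2,3))
qed

lemma farkas_lemma:
  fixes A :: "'i \<Rightarrow> 'x \<Rightarrow> real" and b :: "'i \<Rightarrow> real"
  assumes "finite X" "finite I" "\<nexists>v. \<forall>i\<in>I. (\<Sum>x\<in>X. A i x * v x) \<le> b i"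
  shows "\<exists>\<mu>. (\<forall>i\<in>I. 0 \<le> \<mu> i) \<and> (\<forall>x\<in>X. (\<Sum>i\<in>I. \<mu> i * A i x) = 0) \<and> (\<Sum>i\<in>I. \<mu> i * b i) < 0"
proof -
  have "\<not> satisfiable X ((\<lambda>i. (A i, b i)) ` I)"
    using assms(3) unfolding satisfiable_def slack_def by auto
  then obtain t where "t \<in> nonneg_combinations ((\<lambda>i. (A i, b i)) ` I)"
    "\<forall>x\<in>X. fst t x = 0" "snd t < 0"
    using infeasible_combination assms(1,2) by blast
  with nonneg_combinations_coeffs[OF assms(2)] show ?thesis
    by metis
qed

section \<open>Infeasible path-flow problems\<close>

text \<open>The path-flow problem as a system of inequalities in the path values \<open>g\<close>:
  \<open>Nonneg p\<close> is \<open>- g p \<le> 0\<close>, \<open>Demand_le q\<close> and \<open>Demand_ge q\<close> are the two halves of the demand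
  equation of the commodity \<open>q\<close>, and \<open>Capacity e\<close> bounds the load of the resource \<open>e\<close>.\<close>

datatype ('p, 'q, 'e) flow_constraint =
  Nonneg 'p | Demand_le 'q | Demand_ge 'q | Capacity 'e

definition flow_constraints :: "'p set \<Rightarrow> 'q set \<Rightarrow> 'e set \<Rightarrow> ('p, 'q, 'e) flow_constraint set" where
  "flow_constraints P Q E = Nonneg ` P \<union> Demand_le ` Q \<union> Demand_ge ` Q \<union> Capacity ` E"

fun flow_coeff ::
  "('p \<Rightarrow> 'q) \<Rightarrow> ('p \<Rightarrow> 'e set) \<Rightarrow> ('p, 'q, 'e) flow_constraint \<Rightarrow> 'p \<Rightarrow> real" where
  "flow_coeff ends res (Nonneg p') p = - of_bool (p' = p)"
| "flow_coeff ends res (Demand_le q) p = of_bool (ends p = q)"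
| "flow_coeff ends res (Demand_ge q) p = - of_bool (ends p = q)"
| "flow_coeff ends res (Capacity e) p = of_bool (e \<in> res p)"

fun flow_bound :: "('q \<Rightarrow> real) \<Rightarrow> ('e \<Rightarrow> real) \<Rightarrow> ('p, 'q, 'e) flow_constraint \<Rightarrow> real" where
  "flow_bound dem cap (Nonneg p) = 0"
| "flow_bound dem cap (Demand_le q) = dem q"
| "flow_bound dem cap (Demand_ge q) = - dem q"
| "flow_bound dem cap (Capacity e) = cap e"

lemma sum_flow_constraints:
  assumes "finite P" "finite Q" "finite E"
  shows "(\<Sum>i\<in>flow_constraints P Q E. F i) =
    (\<Sum>p\<in>P. F (Nonneg p)) + (\<Sum>q\<in>Q. F (Demand_le q)) + (\<Sum>q\<in>Q. F (Demand_ge q)) +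
    (\<Sum>e\<in>E. F (Capacity e))"
proof -
  have "(Nonneg ` P \<union> Demand_le ` Q \<union> Demand_ge ` Q) \<inter> Capacity ` E = {}"
    and "(Nonneg ` P \<union> Demand_le ` Q) \<inter> Demand_ge ` Q = {}"
    and "Nonneg ` P \<inter> Demand_le ` Q = {}"
    by auto
  note disjoint_sums = sum.union_disjoint[OF _ _ this(1)] sum.union_disjoint[OF _ _ this(2)]
    sum.union_disjoint[OF _ _ this(3)]
  show ?thesis
    using assms unfolding flow_constraints_def by (simp add: disjoint_sums sum.reindex inj_on_def)
qed

lemma sum_flow_coeff:
  assumes "finite P"
  shows "p \<in> P \<Longrightarrow> (\<Sum>x\<in>P. flow_coeff ends res (Nonneg p) x * g x) = - g p"
    and "(\<Sum>x\<in>P. flow_coeff ends res (Demand_le q) x * g x) = (\<Sum>x\<in>{x\<in>P. ends x = q}. g x)"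
    and "(\<Sum>x\<in>P. flow_coeff ends res (Demand_ge q) x * g x) = - (\<Sum>x\<in>{x\<in>P. ends x = q}. g x)"
    and "(\<Sum>x\<in>P. flow_coeff ends res (Capacity e) x * g x) = (\<Sum>x\<in>{x\<in>P. e \<in> res x}. g x)"
  using assms by (simp_all add: sum.inter_filter sum.inter_restrict sum_negf)

lemma sum_flow_coeff_dual:
  assumes "finite P" "finite Q" "finite E" "p \<in> P" "ends p \<in> Q"
  shows "(\<Sum>i\<in>flow_constraints P Q E. \<mu> i * flow_coeff ends res i p) =
    - \<mu> (Nonneg p) + \<mu> (Demand_le (ends p)) - \<mu> (Demand_ge (ends p)) +
    (\<Sum>e\<in>{e\<in>E. e \<in> res p}. \<mu> (Capacity e))"
  using assms by (simp add: sum_flow_constraints sum.inter_filter sum.inter_restrict sum_negf)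

lemma sum_flow_bound_dual:
  assumes "finite P" "finite Q" "finite E"
  shows "(\<Sum>i\<in>flow_constraints P Q E. \<mu> i * flow_bound dem cap i) =
    (\<Sum>q\<in>Q. (\<mu> (Demand_le q) - \<mu> (Demand_ge q)) * dem q) + (\<Sum>e\<in>E. \<mu> (Capacity e) * cap e)"
  by (simp add: sum_flow_constraints[OF assms] algebra_simps sum_subtractf sum_negf)

lemma flow_constraints_solution:
  assumes "finite P"
    and g: "\<forall>i\<in>flow_constraints P Q E. (\<Sum>p\<in>P. flow_coeff ends res i p * g p) \<le> flow_bound dem cap i"
  shows "(\<forall>p\<in>P. 0 \<le> g p) \<and> (\<forall>q\<in>Q. (\<Sum>p\<in>{p\<in>P. ends p = q}. g p) = dem q) \<and>
    (\<forall>e\<in>E. (\<Sum>p\<in>{p\<in>P. e \<in> res p}. g p) \<le> cap e)"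
proof (intro conjI ballI)
  fix p assume p: "p \<in> P"
  then have "Nonneg p \<in> flow_constraints P Q E"
    by (simp add: flow_constraints_def)
  from this[THEN g[rule_format]] show "0 \<le> g p"
    unfolding sum_flow_coeff(1)[OF assms(1) p] by simp
next
  fix q assume "q \<in> Q"
  then have "Demand_le q \<in> flow_constraints P Q E" "Demand_ge q \<in> flow_constraints P Q E"
    by (simp_all add: flow_constraints_def)
  from this[THEN g[rule_format]] show "(\<Sum>p\<in>{p\<in>P. ends p = q}. g p) = dem q"
    unfolding sum_flow_coeff(2,3)[OF assms(1)] by simp
next
  fix e assume "e \<in> E"
  then have "Capacity e \<in> flow_constraints P Q E"
    by (simp add: flow_constraints_def)
  from this[THEN g[rule_format]] show "(\<Sum>p\<in>{p\<in>P. e \<in> res p}. g p) \<le> cap e"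
    unfolding sum_flow_coeff(4)[OF assms(1)] by simp
qed

lemma path_flow_infeasible_dual:
  fixes dem :: "'q \<Rightarrow> real" and cap :: "'e \<Rightarrow> real"
  assumes fin: "finite P" "finite Q" "finite E" and ends: "ends ` P \<subseteq> Q"
    and infeasible: "\<nexists>g. (\<forall>p\<in>P. 0 \<le> g p) \<and> (\<forall>q\<in>Q. (\<Sum>p\<in>{p\<in>P. ends p = q}. g p) = dem q) \<and>
        (\<forall>e\<in>E. (\<Sum>p\<in>{p\<in>P. e \<in> res p}. g p) \<le> cap e)"
  obtains y z where "\<forall>e\<in>E. 0 \<le> z e" "\<forall>p\<in>P. y (ends p) \<le> (\<Sum>e\<in>{e\<in>E. e \<in> res p}. z e)"
    "(\<Sum>e\<in>E. z e * cap e) < (\<Sum>q\<in>Q. y q * dem q)"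
proof -
  let ?I = "flow_constraints P Q E"
  have "\<nexists>g. \<forall>i\<in>?I. (\<Sum>p\<in>P. flow_coeff ends res i p * g p) \<le> flow_bound dem cap i"
  proof
    assume "\<exists>g. \<forall>i\<in>?I. (\<Sum>p\<in>P. flow_coeff ends res i p * g p) \<le> flow_bound dem cap i"
    then obtain g where "\<forall>i\<in>?I. (\<Sum>p\<in>P. flow_coeff ends res i p * g p) \<le> flow_bound dem cap i"
      by blast
    from flow_constraints_solution[OF fin(1) this] infeasible show False
      by blast
  qed
  moreover have "finite ?I"
    using fin by (simp add: flow_constraints_def)
  ultimately obtain \<mu> where \<mu>: "\<forall>i\<in>?I. 0 \<le> \<mu> i"
    "\<forall>p\<in>P. (\<Sum>i\<in>?I. \<mu> i * flow_coeff ends res i p) = 0"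
    "(\<Sum>i\<in>?I. \<mu> i * flow_bound dem cap i) < 0"
    using farkas_lemma[OF fin(1)] by blast
  show ?thesis
  proof (rule that[of "\<lambda>e. \<mu> (Capacity e)" "\<lambda>q. \<mu> (Demand_ge q) - \<mu> (Demand_le q)"])
    show "\<forall>e\<in>E. 0 \<le> \<mu> (Capacity e)"
      using \<mu>(1) by (simp add: flow_constraints_def)
    show "\<forall>p\<in>P. \<mu> (Demand_ge (ends p)) - \<mu> (Demand_le (ends p))
        \<le> (\<Sum>e\<in>{e\<in>E. e \<in> res p}. \<mu> (Capacity e))"
    proof
      fix p assume p: "p \<in> P"
      have "0 \<le> \<mu> (Nonneg p)"
        using \<mu>(1) p by (simp add: flow_constraints_def)
      then show "\<mu> (Demand_ge (ends p)) - \<mu> (Demand_le (ends p))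
          \<le> (\<Sum>e\<in>{e\<in>E. e \<in> res p}. \<mu> (Capacity e))"
        using \<mu>(2) p ends sum_flow_coeff_dual[OF fin p, of ends \<mu> res] by auto
    qed
    show "(\<Sum>e\<in>E. \<mu> (Capacity e) * cap e) < (\<Sum>q\<in>Q. (\<mu> (Demand_ge q) - \<mu> (Demand_le q)) * dem q)"
      using \<mu>(3) unfolding sum_flow_bound_dual[OF fin]
      by (simp add: algebra_simps sum_subtractf sum_negf)
  qed
qed

lemma set_tl_subset_path_edges: "set (tl p) \<subseteq> snd ` set (path_edges p)"
proof (induction p)
  case (Cons a p)
  then show ?case
    by (cases p) (auto simp: path_edges_def)
qed simp

lemma hd_in_path_edges: "path_edges p \<noteq> [] \<Longrightarrow> hd p \<in> fst ` set (path_edges p)"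
  by (cases p rule: remdups_adj.cases) (auto simp: path_edges_def)

lemma simple_path_vertices:
  assumes "simple_path E p v w" "E \<subseteq> V \<times> V" "v \<in> V"
  shows "set p \<subseteq> V"
proof -
  have "set p = insert v (set (tl p))"
    using assms(1) unfolding simple_path_def by (cases p) auto
  moreover have "snd ` set (path_edges p) \<subseteq> V"
    using assms(1,2) unfolding simple_path_def by auto
  ultimately show ?thesis
    using set_tl_subset_path_edges[of p] assms(3) by auto
qed

lemma finite_simple_paths:
  assumes "finite V" "E \<subseteq> V \<times> V"
  shows "finite {p. \<exists>v\<in>V. \<exists>w. simple_path E p v w}"
proof (rule finite_subset[OF _ finite_subset_distinct[OF assms(1)]])
  show "{p. \<exists>v\<in>V. \<exists>w. simple_path E p v w} \<subseteq> {xs. set xs \<subseteq> V \<and> distinct xs}"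
    using simple_path_vertices[OF _ assms(2)] unfolding simple_path_def by blast
qed

lemma simple_path_edge_start:
  assumes "simple_path E p v w" "E \<subseteq> V \<times> V" "e \<in> set (path_edges p)"
  shows "v \<in> V"
proof -
  have "path_edges p \<noteq> []"
    using assms(3) by auto
  then have "v \<in> fst ` set (path_edges p)"
    using hd_in_path_edges[of p] assms(1) unfolding simple_path_def by auto
  then show ?thesis
    using assms(1,2) unfolding simple_path_def by auto
qed

lemma path_len_simple_path:
  "simple_path E p v w \<Longrightarrow> path_len L p = (\<Sum>e\<in>set (path_edges p). L e)"
  unfolding simple_path_def path_len_def path_edges_def
  by (simp add: distinct_zipI1 sum.distinct_set_conv_list)

lemma simple_path_path_edges_ne: "simple_path E p v w \<Longrightarrow> v \<noteq> w \<Longrightarrow> path_edges p \<noteq> []"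
  unfolding simple_path_def path_edges_def by (cases p rule: remdups_adj.cases) auto

lemma dist_G_greater:
  assumes "finite {p. simple_path E p v w}" "\<And>p. simple_path E p v w \<Longrightarrow> c < path_len L p"
  shows "ereal c < dist_G E L v w"
proof (cases "{p. simple_path E p v w} = {}")
  case True
  then show ?thesis
    unfolding dist_G_def by (simp add: top_ereal_def)
next
  case False
  let ?A = "(\<lambda>p. ereal (path_len L p)) ` {p. simple_path E p v w}"
  have "ereal c < Min ?A"
    using False assms by (subst Min_gr_iff) auto
  also have "Min ?A = Inf ?A"
    using False assms(1) by (intro cInf_eq_Min[symmetric]) auto
  finally show ?thesis
    unfolding dist_G_def .
qed

lemma sep_nonneg: "\<forall>v\<in>V. \<forall>w\<in>V. 0 \<le> D v w \<Longrightarrow> 0 \<le> sep V E l h C D"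
  unfolding sep_def by (intro sum_nonneg) auto

lemma cut_size_nonneg: "moving_cut E h C \<Longrightarrow> 0 \<le> cut_size E u C"
  unfolding cut_size_def moving_cut_def by (intro sum_nonneg) auto

lemma sep_le_cut_size:
  assumes "moving_cut E h C" "ereal \<phi> \<le> spars V E l u h C D" "0 < \<phi>" "\<forall>v\<in>V. \<forall>w\<in>V. 0 \<le> D v w"
  shows "\<phi> * sep V E l h C D \<le> cut_size E u C"
proof (cases "sep V E l h C D = 0")
  case True
  then show ?thesis
    using cut_size_nonneg[OF assms(1)] by simp
next
  case False
  then have "0 < sep V E l h C D"
    using sep_nonneg[OF assms(4)] by (simp add: order_less_le)
  moreover have "\<phi> \<le> cut_size E u C / sep V E l h C D"
    using False assms(2) unfolding spars_def by simp
  ultimately show ?thesis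
    by (simp add: pos_le_divide_eq)
qed

lemma congestion_le:
  assumes "finite E" "0 \<le> K" "\<forall>e\<in>E. 0 < u e" "\<forall>e\<in>E. edge_flow E f e \<le> K * real (u e)"
  shows "congestion E u f \<le> K"
  unfolding congestion_def using assms by (auto simp: divide_le_eq)

section \<open>Dyadic thresholds\<close>

lemma sum_mult_if_filter:
  fixes g :: "'a \<Rightarrow> real"
  assumes "finite A"
  shows "(\<Sum>x\<in>A. g x * (if P x then c else 0)) = c * (\<Sum>x\<in>{x\<in>A. P x}. g x)"
  using assms
  by (simp add: sum_distrib_left sum.inter_filter sum.inter_restrict mult.commute if_distrib
      cong: if_cong)

lemma dyadic_layer_bound:
  fixes d W :: real
  assumes "0 \<le> d" "d \<le> W"
  shows "d \<le> (if 0 < d then W / 2 ^ L else 0) +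
    2 * (\<Sum>i<L. if W / 2 ^ Suc i \<le> d then W / 2 ^ Suc i else 0)"
proof (induction L)
  case 0
  then show ?case
    using assms by simp
next
  case (Suc L)
  let ?layers = "\<lambda>L. \<Sum>i<L. if W / 2 ^ Suc i \<le> d then W / 2 ^ Suc i else 0"
  have "0 \<le> W"
    using assms by linarith
  then have layers_nonneg: "0 \<le> ?layers L" for L
    by (intro sum_nonneg) simp
  show ?case
  proof (cases "W / 2 ^ Suc L \<le> d")
    case True
    then have "?layers (Suc L) = ?layers L + W / 2 ^ Suc L"
      by simp
    moreover have "W / 2 ^ L = 2 * (W / 2 ^ Suc L)" "0 \<le> W / 2 ^ Suc L"
      using \<open>0 \<le> W\<close> by simp_all
    ultimately show ?thesis
      using Suc.IH by (simp split: if_splits)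
  next
    case False
    then show ?thesis
      using assms(1) layers_nonneg[of "Suc L"] by auto
  qed
qed

lemma log_scale_exponent:
  assumes "2 \<le> N"
  obtains L :: nat where "real N ^ 3 \<le> 2 ^ L" "1 + 4 * real L \<le> 40 * ln (real N)"
proof -
  define m where "m = nat \<lceil>log 2 (real N)\<rceil>"
  have "0 < log 2 (real N)"
    using assms by simp
  then have m: "log 2 (real N) \<le> real m" "real m \<le> log 2 (real N) + 1"
    unfolding m_def using of_int_ceiling_le_add_one[of "log 2 (real N)"] by linarith+
  have "real N \<le> 2 ^ m"
    using m(1) assms by (simp add: log_le_iff powr_realpow)
  then have "real N ^ 3 \<le> 2 ^ (3 * m)"
    by (metis power_mono power_mult mult.commute of_nat_0_le_iff)
  moreover have "1 + 4 * real (3 * m) \<le> 40 * ln (real N)"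
  proof -
    have ln2: "2 / 3 \<le> ln (2::real)" "ln 2 \<le> ln (real N)"
      using ln2_ge_two_thirds assms by auto
    then have "log 2 (real N) \<le> 3 / 2 * ln (real N)"
      unfolding log_def by (simp add: divide_le_eq)
    then show ?thesis
      using m(2) ln2 by simp
  qed
  ultimately show ?thesis
    using that by blast
qed

definition endpoints :: "nat list \<Rightarrow> nat \<times> nat" where
  "endpoints p = (hd p, last p)"

locale sparse_demand =
  fixes V :: "nat set" and E :: "(nat \<times> nat) set" and l u :: "nat \<times> nat \<Rightarrow> nat"
    and N h :: nat and D :: "nat \<Rightarrow> nat \<Rightarrow> real" and \<phi> :: real
  assumes finite_V: "finite V" and E_subset: "E \<subseteq> V \<times> V" and N_ge_2: "2 \<le> N"
    and card_V_le: "card V \<le> N"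
    and edge_bounds: "\<forall>e\<in>E. 0 < l e \<and> l e \<le> N \<and> 0 < u e \<and> u e \<le> N"
    and h_pos: "0 < h" and D_nonneg: "\<forall>v\<in>V. \<forall>w\<in>V. 0 \<le> D v w" and \<phi>_pos: "0 < \<phi>"
    and sparsity: "\<forall>C. moving_cut E h C \<longrightarrow> ereal \<phi> \<le> spars V E l u h C D"
begin

definition short_paths :: "nat list set" where
  "short_paths = {p. \<exists>v\<in>V. \<exists>w\<in>V. simple_path E p v w \<and> path_len (\<lambda>e. real (l e)) p \<le> real h}"

definition dem :: "nat \<times> nat \<Rightarrow> real" where
  "dem q = D (fst q) (snd q)"

definition total_capacity :: real where
  "total_capacity = (\<Sum>e\<in>E. real (u e))"

lemma finite_E: "finite E"
  using finite_V E_subset finite_subset by blast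

lemma finite_short_paths: "finite short_paths"
  by (rule finite_subset[OF _ finite_simple_paths[OF finite_V E_subset]])
    (auto simp: short_paths_def)

lemma finite_simple_paths_from: "v \<in> V \<Longrightarrow> finite {p. simple_path E p v w}"
  by (rule finite_subset[OF _ finite_simple_paths[OF finite_V E_subset]]) auto

lemma short_path_simple: "p \<in> short_paths \<Longrightarrow> simple_path E p (hd p) (last p)"
  unfolding short_paths_def simple_path_def by auto

lemma short_path_endpoints: "p \<in> short_paths \<Longrightarrow> endpoints p \<in> V \<times> V"
  unfolding short_paths_def simple_path_def endpoints_def by auto

lemma short_paths_between:
  "v \<in> V \<Longrightarrow> w \<in> V \<Longrightarrow> {p\<in>short_paths. endpoints p = (v, w)} =
     {p. simple_path E p v w \<and> path_len (\<lambda>e. real (l e)) p \<le> real h}"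
  unfolding short_paths_def endpoints_def simple_path_def by auto

lemma dem_nonneg: "q \<in> V \<times> V \<Longrightarrow> 0 \<le> dem q"
  using D_nonneg unfolding dem_def by auto

lemma path_len_cut_len:
  "simple_path E p v w \<Longrightarrow>
     path_len (cut_len l h C) p = (\<Sum>e\<in>set (path_edges p). real (l e) + real h * C e)"
  unfolding path_len_simple_path[of E p v w] cut_len_def by simp

lemma separated_demand_le_cut_size:
  assumes "moving_cut E h C" "S \<subseteq> V \<times> V"
    and "\<forall>q\<in>S. ereal (real h) < dist_G E (cut_len l h C) (fst q) (snd q)"
  shows "\<phi> * (\<Sum>q\<in>S. dem q) \<le> cut_size E u C"
proof -
  let ?sep = "{q\<in>V \<times> V. ereal (real h) < dist_G E (cut_len l h C) (fst q) (snd q)}"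
  have "{(v, w) \<in> V \<times> V. ereal (real h) < dist_G E (cut_len l h C) v w} = ?sep"
    by auto
  then have "sep V E l h C D = (\<Sum>q\<in>?sep. dem q)"
    unfolding sep_def dem_def by (simp add: case_prod_beta)
  moreover have "(\<Sum>q\<in>S. dem q) \<le> (\<Sum>q\<in>?sep. dem q)"
    using assms(2,3) finite_V dem_nonneg by (intro sum_mono2) auto
  ultimately have "\<phi> * (\<Sum>q\<in>S. dem q) \<le> \<phi> * sep V E l h C D"
    using \<phi>_pos by simp
  also have "\<dots> \<le> cut_size E u C"
    using sep_le_cut_size[OF assms(1) _ \<phi>_pos D_nonneg] sparsity assms(1) by blast
  finally show ?thesis .
qed

lemma short_path_exists:
  assumes "q \<in> V \<times> V" "0 < dem q"
  shows "{p\<in>short_paths. endpoints p = q} \<noteq> {}"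
proof
  assume none: "{p\<in>short_paths. endpoints p = q} = {}"
  have "moving_cut E h (\<lambda>_. 0)"
    unfolding moving_cut_def by auto
  moreover have "ereal (real h) < dist_G E (cut_len l h (\<lambda>_. 0)) (fst q) (snd q)"
  proof (rule dist_G_greater)
    show "finite {p. simple_path E p (fst q) (snd q)}"
      using assms(1) by (auto intro: finite_simple_paths_from)
    fix p assume p: "simple_path E p (fst q) (snd q)"
    have "p \<notin> {p\<in>short_paths. endpoints p = (fst q, snd q)}"
      using none by simp
    then have "\<not> path_len (\<lambda>e. real (l e)) p \<le> real h"
      using p short_paths_between[of "fst q" "snd q"] assms(1) by auto
    moreover have "cut_len l h (\<lambda>_. 0) = (\<lambda>e. real (l e))"
      by (simp add: cut_len_def fun_eq_iff)
    ultimately show "real h < path_len (cut_len l h (\<lambda>_. 0)) p"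
      by simp
  qed
  ultimately have "\<phi> * (\<Sum>q'\<in>{q}. dem q') \<le> cut_size E u (\<lambda>_. 0)"
    using assms(1) by (intro separated_demand_le_cut_size) auto
  then show False
    using mult_pos_pos[OF \<phi>_pos assms(2)] by (simp add: cut_size_def)
qed

lemma distinct_pairs_demand_le:
  "\<phi> * (\<Sum>q\<in>{q\<in>V \<times> V. fst q \<noteq> snd q}. dem q) \<le> total_capacity"
proof -
  have one: "real h / real h = 1"
    using h_pos by simp
  have "moving_cut E h (\<lambda>_. 1)"
    unfolding moving_cut_def by (metis one order_refl)
  moreover have "ereal (real h) < dist_G E (cut_len l h (\<lambda>_. 1)) (fst q) (snd q)"
    if q: "q \<in> V \<times> V" "fst q \<noteq> snd q" for q
  proof (rule dist_G_greater)
    show "finite {p. simple_path E p (fst q) (snd q)}"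
      using q by (auto intro: finite_simple_paths_from)
    fix p assume p: "simple_path E p (fst q) (snd q)"
    then obtain e where e: "e \<in> set (path_edges p)"
      using simple_path_path_edges_ne[OF p q(2)] by (meson list.set_sel(1))
    then have "real h < real (l e) + real h * 1"
      using p edge_bounds unfolding simple_path_def by auto
    also have "\<dots> \<le> (\<Sum>e\<in>set (path_edges p). real (l e) + real h * 1)"
      using e by (intro member_le_sum) auto
    finally show "real h < path_len (cut_len l h (\<lambda>_. 1)) p"
      using path_len_cut_len[OF p] by simp
  qed
  ultimately show ?thesis
    using separated_demand_le_cut_size[of "\<lambda>_. 1"] by (simp add: cut_size_def total_capacity_def)
qed

lemma total_capacity_le: "total_capacity \<le> real N ^ 3"
proof -
  have "card E \<le> card V * card V"
    using card_mono[OF _ E_subset] finite_V by (simp add: card_cartesian_product)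
  then have "card E \<le> N * N"
    using card_V_le by (meson order_trans mult_le_mono)
  then have "real (card E) * real N \<le> real N * real N * real N"
    by (intro mult_right_mono) (auto simp flip: of_nat_mult)
  moreover have "total_capacity \<le> real (card E) * real N"
    unfolding total_capacity_def using sum_bounded_above[of E "\<lambda>e. real (u e)" "real N"] edge_bounds
    by auto
  ultimately show ?thesis
    by (simp add: power3_eq_cube)
qed

end

section \<open>Dual edge weights\<close>

locale sparse_demand_dual = sparse_demand +
  fixes z :: "nat \<times> nat \<Rightarrow> real"
  assumes z_nonneg: "\<forall>e\<in>E. 0 \<le> z e"
begin

text \<open>\<open>short_dist q\<close> is \<open>0\<close> when \<open>q\<close> is joined by no short path; such pairs carry no demand
  by \<open>short_path_exists\<close>.\<close>

definition short_dist :: "nat \<times> nat \<Rightarrow> real" where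
  "short_dist q = (if {p\<in>short_paths. endpoints p = q} = {} then 0
     else Min (path_len z ` {p\<in>short_paths. endpoints p = q}))"

definition dual_cost :: real where
  "dual_cost = (\<Sum>e\<in>E. z e * real (u e))"

lemma dual_cost_nonneg: "0 \<le> dual_cost"
  unfolding dual_cost_def using z_nonneg by (intro sum_nonneg) auto

lemma path_len_z_bounds:
  assumes "p \<in> short_paths"
  shows "0 \<le> path_len z p" "path_len z p \<le> dual_cost"
proof -
  note sp = short_path_simple[OF assms]
  then have edges: "set (path_edges p) \<subseteq> E"
    unfolding simple_path_def by blast
  have len: "path_len z p = (\<Sum>e\<in>set (path_edges p). z e)"
    by (rule path_len_simple_path[OF sp])
  show "0 \<le> path_len z p"
    unfolding len using edges z_nonneg by (intro sum_nonneg) auto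
  have "(\<Sum>e\<in>set (path_edges p). z e) \<le> (\<Sum>e\<in>E. z e)"
    using edges z_nonneg finite_E by (intro sum_mono2) auto
  also have "\<dots> \<le> dual_cost"
    unfolding dual_cost_def using z_nonneg edge_bounds
    by (intro sum_mono) (auto simp: mult_le_cancel_left1 Suc_le_eq)
  finally show "path_len z p \<le> dual_cost"
    unfolding len .
qed

lemma short_dist_le: "p \<in> short_paths \<Longrightarrow> endpoints p = q \<Longrightarrow> short_dist q \<le> path_len z p"
  unfolding short_dist_def using finite_short_paths by auto

lemma short_dist_bounds: "0 \<le> short_dist q" "short_dist q \<le> dual_cost"
proof -
  have "0 \<le> short_dist q \<and> short_dist q \<le> dual_cost"
  proof (cases "{p\<in>short_paths. endpoints p = q} = {}")
    case True
    then show ?thesis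
      unfolding short_dist_def using dual_cost_nonneg by simp
  next
    case False
    then obtain p where "p \<in> short_paths" "endpoints p = q"
      by blast
    then show ?thesis
      using short_dist_le path_len_z_bounds False finite_short_paths
      unfolding short_dist_def by (auto intro!: Min.boundedI order_trans[OF _ path_len_z_bounds(2)])
  qed
  then show "0 \<le> short_dist q" "short_dist q \<le> dual_cost"
    by auto
qed

lemma short_dist_diag: "v \<in> V \<Longrightarrow> short_dist (v, v) = 0"
proof -
  assume v: "v \<in> V"
  have "[v] \<in> short_paths" "endpoints [v] = (v, v)"
    using v unfolding short_paths_def simple_path_def endpoints_def path_len_def path_edges_def
    by auto
  then have "short_dist (v, v) \<le> 0"
    using short_dist_le by (fastforce simp: path_len_def path_edges_def)
  then show ?thesis
    using short_dist_bounds(1)[of "(v, v)"] by simp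
qed

lemma dual_objective_le:
  assumes "\<forall>p\<in>short_paths. y (endpoints p) \<le> path_len z p"
  shows "(\<Sum>q\<in>V \<times> V. y q * dem q) \<le> (\<Sum>q\<in>V \<times> V. dem q * short_dist q)"
proof (rule sum_mono)
  fix q assume q: "q \<in> V \<times> V"
  show "y q * dem q \<le> dem q * short_dist q"
  proof (cases "dem q = 0")
    case False
    then have "0 < dem q"
      using dem_nonneg[OF q] by simp
    then have "{p\<in>short_paths. endpoints p = q} \<noteq> {}"
      using short_path_exists[OF q] by blast
    then have "y q \<le> short_dist q"
      unfolding short_dist_def using assms finite_short_paths by (auto intro!: Min.boundedI)
    then show ?thesis
      using \<open>0 < dem q\<close> by (simp add: mult.commute)
  qed simp
qed

text \<open>Rounding \<open>2 h z e / t\<close> down to the grid of \<open>h\<close>-length moving cuts costs at most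
  \<open>2 dual_cost / t\<close> and still makes every short path of \<open>z\<close>-length at least \<open>t\<close> longer
  than \<open>h\<close>: the rounding loss on an edge is below \<open>1 \<le> l e\<close>.\<close>

definition threshold_cut :: "real \<Rightarrow> nat \<times> nat \<Rightarrow> real" where
  "threshold_cut t e = real (min h (nat \<lfloor>2 * real h * z e / t\<rfloor>)) / real h"

lemma moving_cut_threshold_cut: "moving_cut E h (threshold_cut t)"
  unfolding moving_cut_def threshold_cut_def by (blast intro: min.cobounded1)

lemma cut_size_threshold_cut:
  assumes "0 < t"
  shows "cut_size E u (threshold_cut t) \<le> 2 * dual_cost / t"
proof -
  have "threshold_cut t e \<le> 2 * z e / t" if "e \<in> E" for e
  proof -
    have "0 \<le> 2 * real h * z e / t"
      using z_nonneg that assms by simp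
    then have "real (min h (nat \<lfloor>2 * real h * z e / t\<rfloor>)) \<le> 2 * real h * z e / t"
      by linarith
    then have "threshold_cut t e \<le> (2 * real h * z e / t) / real h"
      unfolding threshold_cut_def by (rule divide_right_mono) simp
    also have "\<dots> = 2 * z e / t"
      using h_pos by simp
    finally show ?thesis .
  qed
  then have "cut_size E u (threshold_cut t) \<le> (\<Sum>e\<in>E. real (u e) * (2 * z e / t))"
    unfolding cut_size_def by (intro sum_mono mult_left_mono) auto
  also have "\<dots> = 2 * dual_cost / t"
    unfolding dual_cost_def by (simp add: sum_divide_distrib sum_distrib_left algebra_simps)
  finally show ?thesis .
qed

lemma cut_len_threshold_cut:
  assumes "e \<in> E" "0 < t"
  shows "min (real h + 1) (2 * real h * z e / t) \<le> cut_len l h (threshold_cut t) e"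
proof -
  have "1 \<le> real (l e)"
    using edge_bounds assms(1) by (simp add: Suc_le_eq)
  moreover have "0 \<le> 2 * real h * z e / t"
    using z_nonneg assms by simp
  ultimately show ?thesis
    unfolding cut_len_def threshold_cut_def using h_pos by (simp add: min_def) linarith
qed

lemma threshold_cut_path_long:
  assumes "0 < t" "p \<in> short_paths" "t \<le> path_len z p"
  shows "real h < path_len (cut_len l h (threshold_cut t)) p"
proof -
  let ?c = "cut_len l h (threshold_cut t)"
  note p = short_path_simple[OF assms(2)]
  then have edges: "set (path_edges p) \<subseteq> E"
    unfolding simple_path_def by blast
  have c_nonneg: "0 \<le> ?c e" for e
    by (simp add: cut_len_def threshold_cut_def)
  show ?thesis
  proof (cases "\<exists>e\<in>set (path_edges p). real h + 1 \<le> 2 * real h * z e / t")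
    case True
    then obtain e where e: "e \<in> set (path_edges p)" "real h + 1 \<le> 2 * real h * z e / t"
      by blast
    have "real h < real h + 1"
      by simp
    also have "\<dots> \<le> ?c e"
      using cut_len_threshold_cut[OF _ assms(1), of e] e edges by auto
    also have "\<dots> \<le> path_len ?c p"
      unfolding path_len_simple_path[OF p] using e c_nonneg by (intro member_le_sum) auto
    finally show ?thesis .
  next
    case False
    then have "2 * real h * z e / t \<le> ?c e" if "e \<in> set (path_edges p)" for e
      using cut_len_threshold_cut[OF _ assms(1), of e] that edges by (auto simp: min_def)
    then have "(\<Sum>e\<in>set (path_edges p). 2 * real h / t * z e) \<le> path_len ?c p"
      unfolding path_len_simple_path[OF p] by (intro sum_mono) simp
    moreover have "(\<Sum>e\<in>set (path_edges p). 2 * real h / t * z e) = 2 * real h / t * path_len z p"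
      unfolding path_len_simple_path[OF p] by (simp add: sum_distrib_left)
    moreover have "2 * real h / t * t \<le> 2 * real h / t * path_len z p"
      using assms(1,3) by (intro mult_left_mono) auto
    ultimately show ?thesis
      using assms(1) h_pos by simp
  qed
qed

lemma threshold_cut_separates:
  assumes "0 < t" "q \<in> V \<times> V" "t \<le> short_dist q"
  shows "ereal (real h) < dist_G E (cut_len l h (threshold_cut t)) (fst q) (snd q)"
proof (rule dist_G_greater)
  show "finite {p. simple_path E p (fst q) (snd q)}"
    using assms(2) by (auto intro: finite_simple_paths_from)
  fix p assume p: "simple_path E p (fst q) (snd q)"
  show "real h < path_len (cut_len l h (threshold_cut t)) p"
  proof (cases "path_len (\<lambda>e. real (l e)) p \<le> real h")
    case True
    then have "p \<in> short_paths" "endpoints p = q"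
      using p assms(2) short_paths_between[of "fst q" "snd q"] by auto
    then have "t \<le> path_len z p"
      using short_dist_le assms(3) by fastforce
    with \<open>p \<in> short_paths\<close> show ?thesis
      by (rule threshold_cut_path_long[OF assms(1)])
  next
    case False
    have "path_len (\<lambda>e. real (l e)) p \<le> path_len (cut_len l h (threshold_cut t)) p"
      unfolding path_len_simple_path[OF p]
      by (intro sum_mono) (simp add: cut_len_def threshold_cut_def)
    then show ?thesis
      using False by simp
  qed
qed

lemma far_demand_le:
  assumes "0 < t"
  shows "\<phi> * (\<Sum>q\<in>{q\<in>V \<times> V. t \<le> short_dist q}. dem q) \<le> 2 * dual_cost / t"
  using separated_demand_le_cut_size[OF moving_cut_threshold_cut, of "{q\<in>V \<times> V. t \<le> short_dist q}"]
    threshold_cut_separates[OF assms] cut_size_threshold_cut[OF assms]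
  by fastforce

lemma positive_dist_layer_le:
  assumes "0 \<le> c"
  shows "(\<Sum>q\<in>V \<times> V. dem q * (if 0 < short_dist q then c else 0)) \<le> c * total_capacity / \<phi>"
proof -
  have "(\<Sum>q\<in>{q\<in>V \<times> V. 0 < short_dist q}. dem q) \<le> (\<Sum>q\<in>{q\<in>V \<times> V. fst q \<noteq> snd q}. dem q)"
    using finite_V dem_nonneg short_dist_diag by (intro sum_mono2) auto
  also have "\<dots> \<le> total_capacity / \<phi>"
    using distinct_pairs_demand_le by (subst pos_le_divide_eq[OF \<phi>_pos]) (simp add: mult.commute)
  finally have "c * (\<Sum>q\<in>{q\<in>V \<times> V. 0 < short_dist q}. dem q) \<le> c * (total_capacity / \<phi>)"
    using assms by (rule mult_left_mono)
  then show ?thesis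
    using finite_V by (simp add: sum_mult_if_filter)
qed

lemma threshold_layer_le:
  assumes "0 < t"
  shows "(\<Sum>q\<in>V \<times> V. dem q * (if t \<le> short_dist q then t else 0)) \<le> 2 * dual_cost / \<phi>"
proof -
  have "(\<Sum>q\<in>{q\<in>V \<times> V. t \<le> short_dist q}. dem q) \<le> 2 * dual_cost / t / \<phi>"
    using far_demand_le[OF assms] by (subst pos_le_divide_eq[OF \<phi>_pos]) (simp add: mult.commute)
  then have "t * (\<Sum>q\<in>{q\<in>V \<times> V. t \<le> short_dist q}. dem q) \<le> t * (2 * dual_cost / t / \<phi>)"
    using assms by (intro mult_left_mono) auto
  then show ?thesis
    using assms finite_V by (simp add: sum_mult_if_filter)
qed

lemma demand_weighted_short_dist_le:
  "(\<Sum>q\<in>V \<times> V. dem q * short_dist q)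
     \<le> dual_cost * total_capacity / (2 ^ L * \<phi>) + 4 * real L * dual_cost / \<phi>"
proof (cases "dual_cost = 0")
  case True
  then have "short_dist q = 0" for q
    using short_dist_bounds[of q] by simp
  then show ?thesis
    using True by simp
next
  case False
  let ?W = dual_cost
  have "0 < ?W"
    using False dual_cost_nonneg by linarith
  let ?near = "\<lambda>q. if 0 < short_dist q then ?W / 2 ^ L else 0"
  let ?layer = "\<lambda>i q. if ?W / 2 ^ Suc i \<le> short_dist q then ?W / 2 ^ Suc i else 0"
  have "(\<Sum>q\<in>V \<times> V. dem q * short_dist q) \<le>
      (\<Sum>q\<in>V \<times> V. dem q * (?near q + 2 * (\<Sum>i<L. ?layer i q)))"
    using dyadic_layer_bound[OF short_dist_bounds] dem_nonneg
    by (intro sum_mono mult_left_mono) auto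
  also have "\<dots> = (\<Sum>q\<in>V \<times> V. dem q * ?near q) + 2 * (\<Sum>i<L. \<Sum>q\<in>V \<times> V. dem q * ?layer i q)"
    by (simp add: sum.distrib sum_distrib_left sum.swap[of _ "{..<L}"] algebra_simps)
  also have "(\<Sum>q\<in>V \<times> V. dem q * ?near q) \<le> ?W / 2 ^ L * total_capacity / \<phi>"
    using \<open>0 < ?W\<close> by (intro positive_dist_layer_le) simp
  also have "(\<Sum>i<L. \<Sum>q\<in>V \<times> V. dem q * ?layer i q) \<le> (\<Sum>i<L. 2 * ?W / \<phi>)"
    using \<open>0 < ?W\<close> by (intro sum_mono threshold_layer_le) simp
  finally show ?thesis
    by (simp add: field_simps)
qed

lemma demand_weighted_short_dist_le_log:
  "(\<Sum>q\<in>V \<times> V. dem q * short_dist q) \<le> 40 * ln (real N) * dual_cost / \<phi>"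
proof -
  obtain L where L: "real N ^ 3 \<le> 2 ^ L" "1 + 4 * real L \<le> 40 * ln (real N)"
    using log_scale_exponent[OF N_ge_2] by blast
  have "(\<Sum>q\<in>V \<times> V. dem q * short_dist q)
      \<le> dual_cost * total_capacity / (2 ^ L * \<phi>) + 4 * real L * dual_cost / \<phi>"
    by (rule demand_weighted_short_dist_le)
  also have "dual_cost * total_capacity / (2 ^ L * \<phi>) \<le> dual_cost * 2 ^ L / (2 ^ L * \<phi>)"
    using total_capacity_le L(1) dual_cost_nonneg \<phi>_pos
    by (intro divide_right_mono mult_left_mono) auto
  also have "dual_cost * 2 ^ L / (2 ^ L * \<phi>) + 4 * real L * dual_cost / \<phi>
      = (1 + 4 * real L) * dual_cost / \<phi>"
    by (simp add: add_divide_distrib algebra_simps)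
  also have "\<dots> \<le> 40 * ln (real N) * dual_cost / \<phi>"
    using L(2) dual_cost_nonneg \<phi>_pos by (intro divide_right_mono mult_right_mono) auto
  finally show ?thesis
    by simp
qed

end

context sparse_demand
begin

lemma short_path_flow_exists:
  "\<exists>g. (\<forall>p\<in>short_paths. 0 \<le> g p) \<and>
     (\<forall>q\<in>V \<times> V. (\<Sum>p\<in>{p\<in>short_paths. endpoints p = q}. g p) = dem q) \<and>
     (\<forall>e\<in>E. (\<Sum>p\<in>{p\<in>short_paths. e \<in> set (path_edges p)}. g p) \<le> 40 * ln (real N) / \<phi> * real (u e))"
proof (rule ccontr)
  let ?K = "40 * ln (real N) / \<phi>"
  assume infeasible: "\<not> ?thesis"
  have "finite (V \<times> V)"
    using finite_V by simp
  moreover have "endpoints ` short_paths \<subseteq> V \<times> V"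
    using short_path_endpoints by blast
  ultimately
  obtain y z where z: "\<forall>e\<in>E. 0 \<le> z e"
    and y: "\<forall>p\<in>short_paths. y (endpoints p) \<le> (\<Sum>e\<in>{e\<in>E. e \<in> set (path_edges p)}. z e)"
    and gap: "(\<Sum>e\<in>E. z e * (?K * real (u e))) < (\<Sum>q\<in>V \<times> V. y q * dem q)"
    by (rule path_flow_infeasible_dual[OF finite_short_paths _ finite_E _ infeasible])
  interpret sparse_demand_dual V E l u N h D \<phi> z
    by unfold_locales (rule z)
  have "\<forall>p\<in>short_paths. y (endpoints p) \<le> path_len z p"
  proof
    fix p assume p: "p \<in> short_paths"
    then have "{e\<in>E. e \<in> set (path_edges p)} = set (path_edges p)"
      using short_path_simple unfolding simple_path_def by blast
    then show "y (endpoints p) \<le> path_len z p"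
      using y p short_path_simple path_len_simple_path by metis
  qed
  then have "(\<Sum>q\<in>V \<times> V. y q * dem q) \<le> (\<Sum>q\<in>V \<times> V. dem q * short_dist q)"
    by (rule dual_objective_le)
  also have "\<dots> \<le> 40 * ln (real N) * dual_cost / \<phi>"
    by (rule demand_weighted_short_dist_le_log)
  also have "\<dots> = (\<Sum>e\<in>E. z e * (?K * real (u e)))"
    unfolding dual_cost_def by (simp add: sum_distrib_left sum_divide_distrib algebra_simps)
  finally show False
    using gap by simp
qed

lemma routes_short_path_flow:
  assumes "\<forall>q\<in>V \<times> V. (\<Sum>p\<in>{p\<in>short_paths. endpoints p = q}. g p) = dem q"
  shows "routes V E (\<lambda>p. if p \<in> short_paths then g p else 0) D"
  unfolding routes_def
proof (intro ballI)
  fix v w assume vw: "v \<in> V" "w \<in> V"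
  have "finite {p. simple_path E p v w}"
    using vw(1) by (rule finite_simple_paths_from)
  then have "(\<Sum>p\<in>{p. simple_path E p v w}. if p \<in> short_paths then g p else 0) =
      (\<Sum>p\<in>{p. simple_path E p v w} \<inter> short_paths. g p)"
    by (simp add: sum.inter_restrict)
  also have "{p. simple_path E p v w} \<inter> short_paths = {p\<in>short_paths. endpoints p = (v, w)}"
    using short_path_simple unfolding endpoints_def simple_path_def by auto
  finally show "(\<Sum>p\<in>{p. simple_path E p v w}. if p \<in> short_paths then g p else 0) = D v w"
    using assms vw unfolding dem_def by simp
qed

lemma edge_flow_short_path_flow:
  "edge_flow E (\<lambda>p. if p \<in> short_paths then g p else 0) e =
     (\<Sum>p\<in>{p\<in>short_paths. e \<in> set (path_edges p)}. g p)"
proof -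
  let ?B = "{p. (\<exists>v w. simple_path E p v w) \<and> e \<in> set (path_edges p)}"
  have "finite ?B"
    by (rule finite_subset[OF _ finite_simple_paths[OF finite_V E_subset]])
      (use simple_path_edge_start[OF _ E_subset] in blast)
  then have "edge_flow E (\<lambda>p. if p \<in> short_paths then g p else 0) e = (\<Sum>p\<in>?B \<inter> short_paths. g p)"
    unfolding edge_flow_def by (simp add: sum.inter_restrict)
  also have "?B \<inter> short_paths = {p\<in>short_paths. e \<in> set (path_edges p)}"
    using short_path_simple by blast
  finally show ?thesis .
qed

lemma short_flow_exists:
  "\<exists>f. is_flow E f \<and> routes V E f D \<and>
     (\<forall>p. 0 < f p \<longrightarrow> path_len (\<lambda>e. real (l e)) p \<le> real h) \<and>
     congestion E u f \<le> 40 * ln (real N) / \<phi>"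
proof -
  obtain g where g: "\<forall>p\<in>short_paths. 0 \<le> g p"
    "\<forall>q\<in>V \<times> V. (\<Sum>p\<in>{p\<in>short_paths. endpoints p = q}. g p) = dem q"
    "\<forall>e\<in>E. (\<Sum>p\<in>{p\<in>short_paths. e \<in> set (path_edges p)}. g p) \<le> 40 * ln (real N) / \<phi> * real (u e)"
    using short_path_flow_exists by blast
  let ?f = "\<lambda>p. if p \<in> short_paths then g p else 0"
  have "is_flow E ?f"
    unfolding is_flow_def using g(1) short_path_simple by auto
  moreover have "routes V E ?f D"
    using g(2) by (rule routes_short_path_flow)
  moreover have "\<forall>p. 0 < ?f p \<longrightarrow> path_len (\<lambda>e. real (l e)) p \<le> real h"
    unfolding short_paths_def by auto
  moreover have "congestion E u ?f \<le> 40 * ln (real N) / \<phi>"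
    using g(3) edge_bounds N_ge_2 \<phi>_pos
    by (intro congestion_le[OF finite_E]) (auto simp: edge_flow_short_path_flow)
  ultimately show ?thesis
    by blast
qed

end

theorem theoremA4:
  "\<forall>k::nat. \<exists>c::real. c > 0 \<and>
    (\<forall>(V::nat set) (E::(nat \<times> nat) set) (l::nat \<times> nat \<Rightarrow> nat) (u::nat \<times> nat \<Rightarrow> nat)
       (N::nat) (h::nat) (D::nat \<Rightarrow> nat \<Rightarrow> real) (\<phi>::real).
      finite V \<and> E \<subseteq> V \<times> V \<and> 2 \<le> N \<and> card V \<le> N \<and> N \<le> card V ^ k \<and>
      (\<forall>e\<in>E. 0 < l e \<and> l e \<le> N \<and> 0 < u e \<and> u e \<le> N) \<and>
      0 < h \<and> (\<forall>v\<in>V. \<forall>w\<in>V. 0 \<le> D v w) \<and> 0 < \<phi> \<and>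
      (\<forall>C. moving_cut E h C \<longrightarrow> spars V E l u h C D \<ge> ereal \<phi>)
      \<longrightarrow> (\<exists>f. is_flow E f \<and> routes V E f D \<and>
             (\<forall>p. f p > 0 \<longrightarrow> path_len (\<lambda>e. real (l e)) p \<le> real h) \<and>
             congestion E u f \<le> c * ln (real N) / \<phi>))"
  using sparse_demand.short_flow_exists unfolding sparse_demand_def
  by (intro allI exI[of _ 40] conjI impI) auto

end
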